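(* Let $\Gamma=(V,E)$ be a strongly connected digraph with diameter $D\ge 2$. Let $X=\{x_1,\ldots,x_r\}\subset V$ with $r\ge 2$ be such that all vertices of $X$ have the same set of in-neighbors, say $Y=\Gamma^-(x_i)$ for $i=1,\ldots,r$, and let $Z=\Gamma^+(X)$. Let $\Gamma'$ be a digraph obtained from $\Gamma$ by replacing the set of arcs $e(X,Z)$ by another set of arcs $e'(X,Z)$ (all other arcs unchanged) such that: (i) $e'(Y,X)\cap e'(X,Z)=e(Y,X)\cap e(X,Z)$, where $e'(Y,X)$ denotes the set of arcs from $Y$ to $X$ in $\Gamma'$; (ii) considering the arcs that are not loops, every vertex of $X$ has some out-going arc in $\Gamma'$ to a vertex of $Z$, and every vertex of $Z$ has some in-going arc in $\Gamma'$ from a vertex of $X$. Assume moreover that every vertex of $Z$ has the same number of in-going arcs in $\Gamma'$ as in $\Gamma$, i.e. $|\Gamma'^-(v)|=|\Gamma^-(v)|$ for every $v\in Z$. Then $\Gamma$ and $\Gamma'$ are cospectral, i.e. their adjacency matrices have the same characteristic polynomial.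
   Context: For a vertex $v$, $\Gamma^-(v)$, $\Gamma'^-(v)$ denote the sets of in-neighbors of $v$ in $\Gamma$, $\Gamma'$ respectively, and $\Gamma^+(v)$ the out-neighbors; $\Gamma^+(U)$ is the set of vertices adjacent from some vertex of $U$. For $X,Y\subset V$, $e(X,Y)$ denotes the set of arcs from $X$ to $Y$ in $\Gamma$ ($e'(X,Y)$ in $\Gamma'$). A loop is an arc from a vertex to itself. The adjacency matrix $A=(a_{uv})$ has $a_{uv}=1$ if $(u,v)$ is an arc and $0$ otherwise. *)

theory Defs
  imports "HOL-Analysis.Analysis" "HOL-Computational_Algebra.Polynomial"
begin

text \<open>A digraph on the finite vertex type 'v (vertex set = UNIV) is given by its arc
  set E :: ('v \<times> 'v) set; loops (v,v) are allowed.\<close>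

definition in_nbrs :: "('v \<times> 'v) set \<Rightarrow> 'v \<Rightarrow> 'v set" where
  "in_nbrs E v = {u. (u, v) \<in> E}"

definition out_nbrs :: "('v \<times> 'v) set \<Rightarrow> 'v \<Rightarrow> 'v set" where
  "out_nbrs E v = {w. (v, w) \<in> E}"

definition out_set :: "('v \<times> 'v) set \<Rightarrow> 'v set \<Rightarrow> 'v set" where
  "out_set E U = {w. \<exists>u\<in>U. (u, w) \<in> E}"

definition arcs_between :: "('v \<times> 'v) set \<Rightarrow> 'v set \<Rightarrow> 'v set \<Rightarrow> ('v \<times> 'v) set" where
  "arcs_between E X Y = {(u, w). (u, w) \<in> E \<and> u \<in> X \<and> w \<in> Y}"

definition strongly_connected :: "('v \<times> 'v) set \<Rightarrow> bool" where
  "strongly_connected E \<longleftrightarrow> (\<forall>u v. (u, v) \<in> E\<^sup>*)"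

definition dg_dist :: "('v \<times> 'v) set \<Rightarrow> 'v \<Rightarrow> 'v \<Rightarrow> nat" where
  "dg_dist E u v = (LEAST n. (u, v) \<in> E ^^ n)"

definition diameter :: "('v::finite \<times> 'v) set \<Rightarrow> nat" where
  "diameter E = Max {dg_dist E u v | u v. True}"

definition adj_matrix :: "('v::finite \<times> 'v) set \<Rightarrow> real ^'v ^'v" where
  "adj_matrix E = (\<chi> u v. if (u, v) \<in> E then 1 else 0)"

definition char_poly :: "real ^'n ^'n \<Rightarrow> real poly" where
  "char_poly A = det (\<chi> i j. (if i = j then [:0, 1:] else 0) - [: A $ i $ j :])"

definition cospectral :: "('v::finite \<times> 'v) set \<Rightarrow> ('v \<times> 'v) set \<Rightarrow> bool" where
  "cospectral E E' \<longleftrightarrow> char_poly (adj_matrix E) = char_poly (adj_matrix E')"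

end

theory Submission imports Defs begin

text \<open>Since all vertices of X have the same in-neighbours in both digraphs, the columns of
  the two adjacency matrices indexed by X are constant. The two matrices differ only in the
  rows indexed by X, and the in-degree condition says exactly that every column sum over
  these rows is unchanged. Subtracting one X-column of xI - A from the others and then adding
  the corresponding rows to the remaining X-row turns xI - A into a matrix whose determinant
  only sees the rows outside X and the column sums over X.\<close>

lemma det_eq_prod_diag_if_off_diag_zero_outside_row:
  fixes A :: "'a::comm_ring_1^'n^'n"
  assumes off_diag: "\<And>i j. i \<noteq> j \<Longrightarrow> i \<noteq> k \<Longrightarrow> A$i$j = 0"
  shows "det A = (\<Prod>i\<in>UNIV. A$i$i)"
proof -
  have "(\<Prod>i\<in>UNIV. A$i$p i) = 0" if p: "p permutes UNIV" "p \<noteq> id" for p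
  proof -
    have "\<exists>i. p i \<noteq> i \<and> i \<noteq> k"
    proof (rule ccontr)
      assume "\<not> ?thesis"
      then have fixes_others: "\<And>i. i \<noteq> k \<Longrightarrow> p i = i" by blast
      then have "p k = k"
        by (metis permutes_inj[OF p(1)] injD)
      with fixes_others p(2) show False by (metis eq_id_iff)
    qed
    then show ?thesis
      using off_diag by (metis (no_types, lifting) UNIV_I finite prod_zero)
  qed
  then have "det A = (\<Sum>p\<in>{id}. of_int (sign p) * (\<Prod>i\<in>UNIV. A$i$p i))"
    unfolding det_def
    by (intro sum.mono_neutral_right) (auto simp: finite_permutations permutes_id)
  then show ?thesis by (simp add: sign_id)
qed

lemma det_eq_if_rows_agree_outside_unit_columns:
  fixes N N' :: "'a::comm_ring_1^'n^'n"
  assumes rows: "\<And>i j. i \<notin> S \<Longrightarrow> N$i$j = N'$i$j"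
    and cols: "\<And>i j. j \<in> S \<Longrightarrow> N$i$j = (if i = j then d else 0)"
    and cols': "\<And>i j. j \<in> S \<Longrightarrow> N'$i$j = (if i = j then d else 0)"
  shows "det N = det N'"
  unfolding det_def
proof (rule sum.cong[OF refl])
  fix p assume "p \<in> {p. p permutes (UNIV::'n set)}"
  then have p: "p permutes (UNIV::'n set)" by simp
  have "(\<Prod>i\<in>UNIV. N$i$p i) = (\<Prod>i\<in>UNIV. N'$i$p i)"
  proof (cases "\<forall>i\<in>S. p i = i")
    case True
    then show ?thesis
      by (intro prod.cong refl) (metis cols cols' rows)
  next
    case False
    then obtain i where i: "i \<in> S" "p i \<noteq> i" by blast
    define k where "k = inv p i"
    have "p k = i" "k \<noteq> i"
      unfolding k_def using permutes_inverses(1)[OF p] i(2) by metis+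
    then have "N$k$p k = 0" "N'$k$p k = 0"
      using cols[OF i(1), of k] cols'[OF i(1), of k] by simp_all
    then show ?thesis
      by (metis (no_types, lifting) UNIV_I finite prod_zero)
  qed
  then show "of_int (sign p) * (\<Prod>i\<in>UNIV. N$i$p i) = of_int (sign p) * (\<Prod>i\<in>UNIV. N'$i$p i)"
    by simp
qed

definition row_sum_shear :: "'n \<Rightarrow> 'n set \<Rightarrow> 'a::comm_ring_1^'n^'n" where
  "row_sum_shear k S = (\<chi> i j. of_bool (i = j) + of_bool (i = k \<and> j \<in> S))"

definition col_diff_shear :: "'n \<Rightarrow> 'n set \<Rightarrow> 'a::comm_ring_1^'n^'n" where
  "col_diff_shear k S = (\<chi> i j. of_bool (i = j) - of_bool (i = k \<and> j \<in> S))"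

lemma det_row_sum_shear:
  assumes "k \<notin> S" shows "det (row_sum_shear k S :: 'a::comm_ring_1^'n^'n) = 1"
proof -
  have "det (row_sum_shear k S :: 'a^'n^'n) = (\<Prod>i\<in>UNIV. row_sum_shear k S $ i $ i)"
    by (rule det_eq_prod_diag_if_off_diag_zero_outside_row[where k = k])
       (simp add: row_sum_shear_def)
  also have "\<dots> = 1"
    using assms by (intro prod.neutral) (simp add: row_sum_shear_def)
  finally show ?thesis .
qed

lemma det_col_diff_shear:
  assumes "k \<notin> S" shows "det (col_diff_shear k S :: 'a::comm_ring_1^'n^'n) = 1"
proof -
  have "det (col_diff_shear k S :: 'a^'n^'n) = (\<Prod>i\<in>UNIV. col_diff_shear k S $ i $ i)"
    by (rule det_eq_prod_diag_if_off_diag_zero_outside_row[where k = k])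
       (simp add: col_diff_shear_def)
  also have "\<dots> = 1"
    using assms by (intro prod.neutral) (simp add: col_diff_shear_def)
  finally show ?thesis .
qed

lemma row_sum_shear_mult_nth:
  fixes M :: "'a::comm_ring_1^'n^'n"
  shows "(row_sum_shear k S ** M)$i$j = M$i$j + (if i = k then (\<Sum>l\<in>S. M$l$j) else 0)"
proof -
  have "(row_sum_shear k S ** M)$i$j
        = (\<Sum>l\<in>UNIV. (if l = i then M$l$j else 0) + (if i = k \<and> l \<in> S then M$l$j else 0))"
    unfolding matrix_matrix_mult_def row_sum_shear_def by (auto intro: sum.cong)
  then show ?thesis
    by (simp add: sum.distrib sum.If_cases)
qed

lemma mult_col_diff_shear_nth:
  fixes M :: "'a::comm_ring_1^'n^'n"
  shows "(M ** col_diff_shear k S)$i$j = M$i$j - (if j \<in> S then M$i$k else 0)"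
proof -
  have "(M ** col_diff_shear k S)$i$j
        = (\<Sum>l\<in>UNIV. (if l = j then M$i$l else 0) - (if l = k \<and> j \<in> S then M$i$l else 0))"
    unfolding matrix_matrix_mult_def col_diff_shear_def by (auto intro: sum.cong)
  then show ?thesis
    by (simp add: sum_subtractf)
qed

text \<open>After applying both shears, the columns in X - {x} become d e_j, while the
  other columns only depend on the rows outside X and on the column sums over X.\<close>

lemma det_eq_if_shifted_columns_and_column_sums:
  fixes M M' :: "'a::comm_ring_1^'n^'n"
  assumes x: "x \<in> X"
    and cols: "\<And>i j. j \<in> X \<Longrightarrow> M$i$j - M$i$x = d * (of_bool (i = j) - of_bool (i = x))"
    and cols': "\<And>i j. j \<in> X \<Longrightarrow> M'$i$j - M'$i$x = d * (of_bool (i = j) - of_bool (i = x))"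
    and rows: "\<And>i j. i \<notin> X \<Longrightarrow> M$i$j = M'$i$j"
    and sums: "\<And>j. (\<Sum>i\<in>X. M$i$j) = (\<Sum>i\<in>X. M'$i$j)"
  shows "det M = det M'"
proof -
  define S where "S = X - {x}"
  have "x \<notin> S" unfolding S_def by simp
  define T :: "'a^'n^'n \<Rightarrow> 'a^'n^'n" where
    "T C = row_sum_shear x S ** (C ** col_diff_shear x S)" for C
  have det_T: "det (T C) = det C" for C
    unfolding T_def using \<open>x \<notin> S\<close> by (simp add: det_mul det_row_sum_shear det_col_diff_shear)
  have T_nth: "T C$i$j = (if i = x then \<Sum>l\<in>X. (C ** col_diff_shear x S)$l$j
                          else (C ** col_diff_shear x S)$i$j)" for C i j
    unfolding T_def row_sum_shear_mult_nth using x
    by (simp add: S_def sum.remove[of X x])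
  have unit_col: "T C$i$j = (if i = j then d else 0)"
    if j: "j \<in> S" and C: "\<And>i j. j \<in> X \<Longrightarrow> C$i$j - C$i$x = d * (of_bool (i = j) - of_bool (i = x))"
    for C i j
  proof -
    have j': "j \<in> X" "j \<noteq> x" using j unfolding S_def by auto
    have "(C ** col_diff_shear x S)$l$j = d * (of_bool (l = j) - of_bool (l = x))" for l
      using j C[OF j'(1)] by (simp add: mult_col_diff_shear_nth)
    then show ?thesis
      using j' x by (simp add: T_nth sum_subtractf sum_distrib_left[symmetric])
  qed
  have "T M$i$j = T M'$i$j" if "i \<notin> S" for i j
  proof (cases "i = x")
    case True
    then show ?thesis
      by (cases "j \<in> S") (simp_all add: T_nth mult_col_diff_shear_nth sum_subtractf sums)
  next
    case False
    with that have "i \<notin> X" unfolding S_def by blast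
    then show ?thesis
      using False by (simp add: T_nth mult_col_diff_shear_nth rows)
  qed
  then have "det (T M) = det (T M')"
    using unit_col cols cols' by (intro det_eq_if_rows_agree_outside_unit_columns) blast+
  then show ?thesis by (simp add: det_T)
qed

lemma char_poly_eq_if_equal_columns_and_column_sums:
  fixes A B :: "real^'n^'n"
  assumes x: "x \<in> X"
    and cols_A: "\<And>i j. j \<in> X \<Longrightarrow> A$i$j = A$i$x"
    and cols_B: "\<And>i j. j \<in> X \<Longrightarrow> B$i$j = B$i$x"
    and rows: "\<And>i j. i \<notin> X \<Longrightarrow> A$i$j = B$i$j"
    and sums: "\<And>j. (\<Sum>i\<in>X. A$i$j) = (\<Sum>i\<in>X. B$i$j)"
  shows "char_poly A = char_poly B"
  unfolding char_poly_def
proof (rule det_eq_if_shifted_columns_and_column_sums[OF x, where d = "[:0, 1:]"])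
  show "(\<Sum>i\<in>X. (\<chi> i j. (if i = j then [:0, 1:] else 0) - [:A$i$j:])$i$j)
        = (\<Sum>i\<in>X. (\<chi> i j. (if i = j then [:0, 1:] else 0) - [:B$i$j:])$i$j)" for j
    by (simp add: sum_subtractf sum_to_poly sums)
qed (auto simp: cols_A cols_B rows one_pCons)

lemma arc_unchanged_outside:
  assumes "E' - arcs_between E' X Z = E - arcs_between E X Z"
    and "u \<notin> X \<or> v \<notin> Z"
  shows "(u, v) \<in> E' \<longleftrightarrow> (u, v) \<in> E"
  using assms unfolding arcs_between_def by (metis (no_types, lifting) Diff_iff case_prod_conv mem_Collect_eq)

lemma card_in_nbrs_Int_unchanged_outside:
  fixes E E' :: "('v::finite \<times> 'v) set"
  assumes unchanged: "\<And>u. u \<notin> X \<Longrightarrow> (u, v) \<in> E' \<longleftrightarrow> (u, v) \<in> E"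
    and indeg: "card (in_nbrs E' v) = card (in_nbrs E v)"
  shows "card (in_nbrs E' v \<inter> X) = card (in_nbrs E v \<inter> X)"
proof -
  have "in_nbrs E' v - X = in_nbrs E v - X"
    using unchanged unfolding in_nbrs_def by auto
  moreover have "card (in_nbrs F v) = card (in_nbrs F v \<inter> X) + card (in_nbrs F v - X)"
    for F :: "('v \<times> 'v) set"
    by (rule card_Int_Diff) simp
  ultimately show ?thesis
    using indeg by (metis add_right_cancel)
qed

text \<open>This is where condition (i) and the in-degree condition enter: an arc of E entering
  x \<in> X \<inter> Z from X survives by (i), so the in-neighbourhood can only grow, and equal
  cardinality forces equality.\<close>

lemma in_nbrs_eq_after_replacement:
  fixes E E' :: "('v::finite \<times> 'v) set"
  assumes Y: "\<forall>x\<in>X. in_nbrs E x = Y"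
    and replace: "E' - arcs_between E' X Z = E - arcs_between E X Z"
    and cond_i: "arcs_between E' Y X \<inter> arcs_between E' X Z
                 = arcs_between E Y X \<inter> arcs_between E X Z"
    and indeg: "\<forall>v\<in>Z. card (in_nbrs E' v) = card (in_nbrs E v)"
    and x: "x \<in> X"
  shows "in_nbrs E' x = Y"
proof (cases "x \<in> Z")
  case False
  then show ?thesis
    using Y x arc_unchanged_outside[OF replace] unfolding in_nbrs_def by auto
next
  case True
  have "in_nbrs E x \<subseteq> in_nbrs E' x"
  proof
    fix u assume u: "u \<in> in_nbrs E x"
    show "u \<in> in_nbrs E' x"
    proof (cases "u \<in> X")
      case True
      with u x Y \<open>x \<in> Z\<close> have "(u, x) \<in> arcs_between E Y X \<inter> arcs_between E X Z"
        by (auto simp: arcs_between_def in_nbrs_def)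
      then have "(u, x) \<in> arcs_between E' Y X \<inter> arcs_between E' X Z"
        using cond_i by simp
      then show ?thesis
        by (simp add: arcs_between_def in_nbrs_def)
    next
      case False
      then show ?thesis
        using u arc_unchanged_outside[OF replace] by (simp add: in_nbrs_def)
    qed
  qed
  then have "in_nbrs E x = in_nbrs E' x"
    by (rule card_subset_eq[OF finite]) (use indeg True in simp)
  then show ?thesis using Y x by simp
qed

lemma adj_matrix_col_eq_if_same_in_nbrs:
  "in_nbrs E x = in_nbrs E y \<Longrightarrow> adj_matrix E $ u $ x = adj_matrix E $ u $ y"
  unfolding adj_matrix_def in_nbrs_def by (simp add: set_eq_iff)

lemma sum_adj_matrix_col: "(\<Sum>u\<in>X. adj_matrix E $ u $ v) = real (card (in_nbrs E v \<inter> X))"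
proof -
  have "(\<Sum>u\<in>X. adj_matrix E $ u $ v) = real (card {u\<in>X. (u, v) \<in> E})"
    by (simp add: adj_matrix_def sum.inter_filter[symmetric])
  also have "{u\<in>X. (u, v) \<in> E} = in_nbrs E v \<inter> X"
    by (auto simp: in_nbrs_def)
  finally show ?thesis .
qed

theorem mainTheorem4:
  fixes E E' :: "('v::finite \<times> 'v) set"
    and X Y Z :: "'v set"
  assumes sc: "strongly_connected E"
    and diam: "diameter E \<ge> 2"
    and X_card: "card X \<ge> 2"
    and Y_def: "\<forall>x\<in>X. in_nbrs E x = Y"
    and Z_def: "Z = out_set E X"
    and replace: "E' - arcs_between E' X Z = E - arcs_between E X Z"
    and cond_i: "arcs_between E' Y X \<inter> arcs_between E' X Z
                 = arcs_between E Y X \<inter> arcs_between E X Z"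
    and cond_ii_out: "\<forall>x\<in>X. \<exists>z\<in>Z. z \<noteq> x \<and> (x, z) \<in> E'"
    and cond_ii_in: "\<forall>z\<in>Z. \<exists>x\<in>X. x \<noteq> z \<and> (x, z) \<in> E'"
    and indeg: "\<forall>v\<in>Z. card (in_nbrs E' v) = card (in_nbrs E v)"
  shows "cospectral E E'"
proof -
  obtain x where x: "x \<in> X" using X_card by fastforce
  note unchanged = arc_unchanged_outside[OF replace]
  have in_nbrs': "\<forall>y\<in>X. in_nbrs E' y = Y"
    using in_nbrs_eq_after_replacement[OF Y_def replace cond_i indeg] by blast
  have "card (in_nbrs E v \<inter> X) = card (in_nbrs E' v \<inter> X)" for v
  proof (cases "v \<in> Z")
    case True
    then show ?thesis
      using indeg unchanged by (metis card_in_nbrs_Int_unchanged_outside)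
  next
    case False
    then show ?thesis
      using unchanged unfolding in_nbrs_def by auto
  qed
  then show ?thesis
    unfolding cospectral_def
  proof (intro char_poly_eq_if_equal_columns_and_column_sums[OF x])
    show "adj_matrix E $ u $ y = adj_matrix E $ u $ x"
      and "adj_matrix E' $ u $ y = adj_matrix E' $ u $ x" if "y \<in> X" for u y
      using that x Y_def in_nbrs' by (metis adj_matrix_col_eq_if_same_in_nbrs)+
    show "adj_matrix E $ u $ v = adj_matrix E' $ u $ v" if "u \<notin> X" for u v
      using that unchanged by (simp add: adj_matrix_def)
  qed (simp add: sum_adj_matrix_col)
qed

end
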